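(* Assume $b>1$. For every $1\le i\le b$ and every positive integer $n$, $$p\,d_i(n)>\sum_{k=0}^\infty y_i\bigl(n-k(p-1)\bigr).$$
   Context: Let $q=p^b$ with $p$ prime. Let $y\in\mathbb{Z}_p$ be written $y=\sum_{i=1}^b p^{i-1}y_i$ with $y_i=\sum_{j\ge0}y_{i,j}q^j$, $0\le y_{i,j}<p$, and assume no $y_i$ is a non-negative integer. For $n\ge1$, $d_i(n)=p^{i-1}q^w$ where $w\ge0$ is the unique integer with $\sum_{j=0}^{w-1}y_{i,j}<n\le\sum_{j=0}^{w}y_{i,j}$. For $m\in\mathbb{Z}$, $y_i(m)=\sum_{n=1}^m d_i(n)$, which is $0$ for $m\le0$ (so the sum is finite). *)

theory Defs
  imports Complex_Main "HOL-Computational_Algebra.Primes"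
begin

text \<open>The p-adic integer y is represented by its digit array:
  ydig i j = y_{i,j}, the j-th base-q digit of y_i (each in [0,p)).
  Here q = p^b.\<close>

definition dfun :: "nat \<Rightarrow> nat \<Rightarrow> (nat \<Rightarrow> nat \<Rightarrow> nat) \<Rightarrow> nat \<Rightarrow> nat \<Rightarrow> nat" where
  "dfun p b ydig i n =
     p ^ (i - 1) * (p ^ b) ^ (THE w. (\<Sum>j<w. ydig i j) < n \<and> n \<le> (\<Sum>j\<le>w. ydig i j))"

definition yfun :: "nat \<Rightarrow> nat \<Rightarrow> (nat \<Rightarrow> nat \<Rightarrow> nat) \<Rightarrow> nat \<Rightarrow> int \<Rightarrow> nat" where
  "yfun p b ydig i m = (\<Sum>n\<in>{1..nat m}. dfun p b ydig i n)"

end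

theory Submission
  imports Defs
begin

text \<open>Let a j = y_{i,j} and A w = a 0 + ... + a (w - 1). The integers 1, 2, ... fall into
  consecutive blocks of lengths a 0, a 1, ..., and d_i(n) = p^(i-1) q^w for n in block w, i.e. for
  A w < n \<le> A (w + 1); consequently y_i(A w + k) = p^(i-1) (\<Sum>_{j<w} a j q^j + k q^w) for k \<le> a w.
  The series T m = \<Sum>_k y_i(m - k(p - 1)) satisfies T m = y_i(m) + T (m - (p - 1)), and induction
  on w gives q T m < p^i q^w whenever m \<le> A w: for m in block w the shifted argument m - (p - 1)
  lies below block w because a w < p, and what remains is the estimate
  q \<Sum>_{j<w} a j q^j + p q^w \<le> q^(w+1), which holds because a j + p < 2p \<le> p^b = q.
  This is the only place where b > 1 is needed.\<close>

definition block :: "(nat \<Rightarrow> nat) \<Rightarrow> nat \<Rightarrow> nat" where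
  "block a n = (THE w. (\<Sum>j<w. a j) < n \<and> n \<le> (\<Sum>j\<le>w. a j))"

lemma block_eqI:
  fixes a :: "nat \<Rightarrow> nat"
  assumes "(\<Sum>j<w. a j) < n" and "n \<le> (\<Sum>j<Suc w. a j)"
  shows "block a n = w"
  unfolding block_def
proof (rule the_equality)
  show "(\<Sum>j<w. a j) < n \<and> n \<le> (\<Sum>j\<le>w. a j)"
    using assms by (simp add: lessThan_Suc_atMost)
next
  have mono: "(\<Sum>j<u. a j) \<le> (\<Sum>j<v. a j)" if "u \<le> v" for u v
    using that by (intro sum_mono2) auto
  fix v assume "(\<Sum>j<v. a j) < n \<and> n \<le> (\<Sum>j\<le>v. a j)"
  then have v: "(\<Sum>j<v. a j) < n" "n \<le> (\<Sum>j<Suc v. a j)"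
    by (simp_all add: lessThan_Suc_atMost)
  have "\<not> v < w" using mono[of "Suc v" w] v(2) assms(1) by linarith
  moreover have "\<not> w < v" using mono[of "Suc w" v] v(1) assms(2) by linarith
  ultimately show "v = w" by simp
qed

lemma partial_sums_unbounded:
  fixes a :: "nat \<Rightarrow> nat"
  assumes "\<not> (\<exists>N. \<forall>j\<ge>N. a j = 0)"
  shows "\<exists>w. n \<le> (\<Sum>j<w. a j)"
proof (induction n)
  case 0
  show ?case by simp
next
  case (Suc n)
  then obtain w where w: "n \<le> (\<Sum>j<w. a j)" by blast
  from assms obtain j where "w \<le> j" "a j \<noteq> 0" by blast
  then have "(\<Sum>j<w. a j) < (\<Sum>j<Suc j. a j)"
    using sum_mono2[of "{..<j}" "{..<w}" a] by simp
  with w show ?case by (intro exI[of _ "Suc j"]) simp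
qed

lemma block_bounds:
  fixes a :: "nat \<Rightarrow> nat"
  assumes "\<not> (\<exists>N. \<forall>j\<ge>N. a j = 0)" and "0 < n"
  shows "(\<Sum>j<block a n. a j) < n" and "n \<le> (\<Sum>j<Suc (block a n). a j)"
proof -
  obtain w where "n \<le> (\<Sum>j<w. a j)"
    using partial_sums_unbounded[OF assms(1)] by blast
  then obtain k where k: "\<not> n \<le> (\<Sum>j<k. a j)" "n \<le> (\<Sum>j<Suc k. a j)"
    using ex_least_nat_less[of "\<lambda>w. n \<le> (\<Sum>j<w. a j)"] assms(2) by auto
  then have "block a n = k" by (intro block_eqI) simp_all
  with k show "(\<Sum>j<block a n. a j) < n" and "n \<le> (\<Sum>j<Suc (block a n). a j)"
    by simp_all
qed

lemma sum_block_power_extend: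
  fixes a :: "nat \<Rightarrow> nat" and q :: nat
  assumes "k \<le> a w"
  shows "(\<Sum>t=1..(\<Sum>j<w. a j) + k. q ^ block a t)
       = (\<Sum>t=1..(\<Sum>j<w. a j). q ^ block a t) + k * q ^ w"
proof -
  let ?A = "\<Sum>j<w. a j"
  have "(\<Sum>t=1..?A + k. q ^ block a t)
      = (\<Sum>t=1..?A. q ^ block a t) + (\<Sum>t=?A+1..?A + k. q ^ block a t)"
    by (rule sum.ub_add_nat) simp
  also have "(\<Sum>t=?A+1..?A + k. q ^ block a t) = (\<Sum>t=?A+1..?A + k. q ^ w)"
    using assms by (intro sum.cong refl arg_cong[where f = "\<lambda>e. q ^ e"] block_eqI) auto
  finally show ?thesis by simp
qed

lemma sum_block_power_partial_sum:
  fixes a :: "nat \<Rightarrow> nat" and q :: nat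
  shows "(\<Sum>t=1..(\<Sum>j<w. a j). q ^ block a t) = (\<Sum>j<w. a j * q ^ j)"
proof (induction w)
  case (Suc w)
  then show ?case
    using sum_block_power_extend[of "a w" a w q] by simp
qed simp

lemma digit_sum_scaled_bound:
  fixes a :: "nat \<Rightarrow> nat" and p q :: nat
  assumes "\<And>j. a j + p < q"
  shows "q * (\<Sum>j<w. a j * q ^ j) + p * q ^ w \<le> q ^ Suc w"
proof (induction w)
  case 0
  show ?case using assms[of 0] by simp
next
  case (Suc w)
  have "q * (\<Sum>j<Suc w. a j * q ^ j) + p * q ^ Suc w
      = q * (\<Sum>j<w. a j * q ^ j) + (a w + p) * q ^ Suc w"
    by (simp add: algebra_simps)
  also have "\<dots> \<le> q ^ Suc w + (a w + p) * q ^ Suc w"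
    using Suc.IH by linarith
  also have "\<dots> = Suc (a w + p) * q ^ Suc w"
    by simp
  also have "\<dots> \<le> q * q ^ Suc w"
    using assms[of w] by (intro mult_right_mono) auto
  finally show ?case by simp
qed

lemma digit_sum_extend_bound:
  fixes a :: "nat \<Rightarrow> nat" and p q k :: nat
  assumes "\<And>j. a j + p < q" and "k < p"
  shows "q * ((\<Sum>j<w. a j * q ^ j) + k * q ^ w) + p * q ^ w \<le> p * q ^ Suc w"
proof -
  have "q * ((\<Sum>j<w. a j * q ^ j) + k * q ^ w) + p * q ^ w
      = (q * (\<Sum>j<w. a j * q ^ j) + p * q ^ w) + k * q ^ Suc w"
    by (simp add: algebra_simps)
  also have "\<dots> \<le> q ^ Suc w + k * q ^ Suc w"
    using digit_sum_scaled_bound[OF assms(1)] by simp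
  also have "\<dots> \<le> p * q ^ Suc w"
    using assms(2) by (simp add: mult_le_mono1 flip: mult_Suc)
  finally show ?thesis .
qed

lemma summable_progression_samples:
  fixes g :: "int \<Rightarrow> 'a::real_normed_vector"
  assumes "\<And>x. x \<le> 0 \<Longrightarrow> g x = 0" and "0 < r"
  shows "summable (\<lambda>k. g (m - int k * r))"
proof (rule summable_finite[of "{..nat m}"])
  fix k assume "k \<notin> {..nat m}"
  then have "m < int k" by auto
  also have "int k \<le> int k * r" using assms(2) by (simp add: mult_le_cancel_left1)
  finally show "g (m - int k * r) = 0" by (intro assms(1)) simp
qed simp

lemma suminf_progression_samples_nonpos:
  fixes g :: "int \<Rightarrow> 'a::real_normed_vector"
  assumes "\<And>x. x \<le> 0 \<Longrightarrow> g x = 0" and "0 \<le> r" and "m \<le> 0"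
  shows "(\<Sum>k. g (m - int k * r)) = 0"
proof -
  have "g (m - int k * r) = 0" for k
  proof -
    have "0 \<le> int k * r" using assms(2) by simp
    with assms(3) show ?thesis by (intro assms(1)) linarith
  qed
  then show ?thesis by simp
qed

lemma suminf_progression_samples_unfold:
  fixes g :: "int \<Rightarrow> 'a::real_normed_vector"
  assumes "\<And>x. x \<le> 0 \<Longrightarrow> g x = 0" and "0 < r"
  shows "(\<Sum>k. g (m - int k * r)) = g m + (\<Sum>k. g (m - r - int k * r))"
  using suminf_split_head[OF summable_progression_samples[of g r m, OF assms]]
  by (simp add: algebra_simps)

lemma progression_block_sum_bound:
  fixes a :: "nat \<Rightarrow> nat" and p q :: nat
  assumes "1 < p" and "2 * p \<le> q" and "\<And>j. a j < p" and "m \<le> int (\<Sum>j<w. a j)"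
  shows "real q * (\<Sum>k. real (\<Sum>t=1..nat (m - int k * (int p - 1)). q ^ block a t))
           < real (p * q ^ w)"
proof -
  define g where "g x = real (\<Sum>t=1..nat x. q ^ block a t)" for x
  define T where "T x = (\<Sum>k. g (x - int k * (int p - 1)))" for x
  have g_nonpos: "g x = 0" if "x \<le> 0" for x
    using that by (simp add: g_def)
  have step_pos: "0 < int p - 1"
    using assms(1) by simp
  have digit_room: "a j + p < q" for j
    using assms(2) assms(3)[of j] by linarith
  have "real q * T m < real (p * q ^ w)"
    using assms(4)
  proof (induction w arbitrary: m)
    case 0
    then have "T m = 0"
      unfolding T_def using g_nonpos step_pos by (intro suminf_progression_samples_nonpos) auto
    then show ?case using assms(1) by simp
  next
    case (Suc w m)
    let ?A = "\<Sum>j<w. a j"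
    show ?case
    proof (cases "m \<le> int ?A")
      case True
      then have "real q * T m < real (p * q ^ w)" by (rule Suc.IH)
      also have "\<dots> \<le> real (p * q ^ Suc w)" using assms(1,2) by simp
      finally show ?thesis .
    next
      case False
      define k where "k = nat (m - int ?A)"
      have m_eq: "m = int (?A + k)" and "k \<le> a w"
        using False Suc.prems unfolding k_def by auto
      then have "k < p"
        using assms(3)[of w] by linarith
      have tail: "real q * T (m - (int p - 1)) < real (p * q ^ w)"
        using m_eq \<open>k < p\<close> by (intro Suc.IH) linarith
      have head: "g m = real ((\<Sum>j<w. a j * q ^ j) + k * q ^ w)"
        unfolding g_def m_eq nat_int sum_block_power_extend[of k a w q, OF \<open>k \<le> a w\<close>]
          sum_block_power_partial_sum ..
      have "q * ((\<Sum>j<w. a j * q ^ j) + k * q ^ w) + p * q ^ w \<le> p * q ^ Suc w"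
        using digit_room \<open>k < p\<close> by (rule digit_sum_extend_bound)
      then have "real q * g m + real (p * q ^ w) \<le> real (p * q ^ Suc w)"
        unfolding head by (simp only: of_nat_mult [symmetric] of_nat_add [symmetric] of_nat_le_iff)
      moreover have "T m = g m + T (m - (int p - 1))"
        unfolding T_def by (rule suminf_progression_samples_unfold[of g, OF g_nonpos step_pos])
      ultimately show ?thesis
        using tail by (simp add: distrib_left)
    qed
  qed
  then show ?thesis
    unfolding T_def g_def .
qed

lemma progression_block_sum_less:
  fixes a :: "nat \<Rightarrow> nat" and p q n :: nat
  assumes "1 < p" and "2 * p \<le> q" and "\<And>j. a j < p"
    and "\<not> (\<exists>N. \<forall>j\<ge>N. a j = 0)" and "0 < n"
  shows "(\<Sum>k. real (\<Sum>t=1..nat (int n - int k * (int p - 1)). q ^ block a t))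
           < real (p * q ^ block a n)"
proof -
  have "n \<le> (\<Sum>j<Suc (block a n). a j)"
    using block_bounds(2)[OF assms(4,5)] .
  then have "real q * (\<Sum>k. real (\<Sum>t=1..nat (int n - int k * (int p - 1)). q ^ block a t))
      < real (p * q ^ Suc (block a n))"
    using assms(1-3) by (intro progression_block_sum_bound) (simp_all del: of_nat_sum)
  also have "\<dots> = real q * real (p * q ^ block a n)"
    by simp
  finally show ?thesis
    by (simp add: mult_less_cancel_left)
qed

lemma double_le_power:
  fixes p b :: nat
  assumes "1 < p" and "1 < b"
  shows "2 * p \<le> p ^ b"
proof -
  have "2 * p \<le> p ^ 2"
    using assms(1) by (simp add: power2_eq_square)
  also have "\<dots> \<le> p ^ b"
    using assms by (intro power_increasing) auto
  finally show ?thesis .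
qed

lemma dfun_eq_block:
  "dfun p b ydig i n = p ^ (i - 1) * (p ^ b) ^ block (ydig i) n"
  by (simp add: dfun_def block_def)

lemma suminf_yfun_progression:
  fixes p :: nat
  assumes "1 < p"
  shows "(\<Sum>k. real (yfun p b ydig i (m - int k * (int p - 1))))
       = real (p ^ (i - 1))
         * (\<Sum>k. real (\<Sum>t=1..nat (m - int k * (int p - 1)). (p ^ b) ^ block (ydig i) t))"
proof -
  have "summable (\<lambda>k. real (\<Sum>t=1..nat (m - int k * (int p - 1)). (p ^ b) ^ block (ydig i) t))"
    using assms by (intro summable_progression_samples) simp_all
  then show ?thesis
    by (simp only: yfun_def dfun_eq_block sum_distrib_left [symmetric] of_nat_mult suminf_mult)
qed

theorem lemma6p6:
  fixes p b :: nat and ydig :: "nat \<Rightarrow> nat \<Rightarrow> nat"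
  assumes "prime p"
    and "b > 1"
    and "\<And>i j. 1 \<le> i \<Longrightarrow> i \<le> b \<Longrightarrow> ydig i j < p"
    and "\<And>i. 1 \<le> i \<Longrightarrow> i \<le> b \<Longrightarrow> \<not> (\<exists>N. \<forall>j\<ge>N. ydig i j = 0)"
    and "1 \<le> i" and "i \<le> b" and "(n::nat) \<ge> 1"
  shows "real (p * dfun p b ydig i n)
           > (\<Sum>k. real (yfun p b ydig i (int n - int k * (int p - 1))))"
proof -
  have p_gt_1: "1 < p"
    using assms(1) by (rule prime_gt_1_nat)
  have "(\<Sum>k. real (\<Sum>t=1..nat (int n - int k * (int p - 1)). (p ^ b) ^ block (ydig i) t))
      < real (p * (p ^ b) ^ block (ydig i) n)"
    using p_gt_1 double_le_power[OF p_gt_1 assms(2)] assms(3-7)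
    by (intro progression_block_sum_less) auto
  moreover have "0 < p ^ (i - 1)"
    using p_gt_1 by simp
  ultimately show ?thesis
    unfolding suminf_yfun_progression[OF p_gt_1] dfun_eq_block
    by (simp add: algebra_simps)
qed

end
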